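(* Let $A\in\mathbb{R}^{n\times n}$, $B\in\mathbb{R}^{n\times k}$ and $F\in\mathbb{R}^{k\times n}$ be fixed. For $C\in\mathbb{R}^{m\times n}$ let $\Omega(C,F)=[C;\,C(A+BF);\,\dots;\,C(A+BF)^{n-1}]$ and let $\mathcal{V}^*(C)$ be the maximal $(A,B)$-invariant subspace contained in $\operatorname{Ker}C$. Define $BR1_a=\arg\min_{C\in\mathbb{R}^{m\times n}}\dim\operatorname{Ker}\Omega(C,F)$, $BR2_a=\arg\min_{C\in BR1_a}\dim\mathcal{V}^*(C)$ and $BR2X_a=\arg\min_{C\in\mathbb{R}^{m\times n}}\dim\mathcal{V}^*(C)$. If $\dim\operatorname{Ker}\Omega(C,F)=\dim\mathcal{V}^*(C)$ for every $C\in BR1_a$, then $BR1_a=BR2_a\subseteq BR2X_a$.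
   Context: A subspace $\mathcal{V}\subseteq\mathbb{R}^n$ is $(A,B)$-invariant if there exists a matrix $F'$ with $(A+BF')\mathcal{V}\subseteq\mathcal{V}$. Among all $(A,B)$-invariant subspaces contained in $\operatorname{Ker}C$ there is a maximal one, $\mathcal{V}^*(C)$. *)

theory Defs
  imports "HOL-Analysis.Analysis"
begin

primrec mat_pow :: "real^'n^'n \<Rightarrow> nat \<Rightarrow> real^'n^'n" where
  "mat_pow M 0 = mat 1"
| "mat_pow M (Suc i) = M ** mat_pow M i"

definition mat_ker :: "real^'n^'m \<Rightarrow> (real^'n) set" where
  "mat_ker M = {x. M *v x = 0}"

text \<open>Kernel of the observability-type matrix
  Omega(C,F) = [C; C(A+BF); ...; C(A+BF)^(n-1)], n = CARD('n):
  x is in the kernel iff every block row annihilates x.\<close>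
definition omega_ker :: "real^'n^'n \<Rightarrow> real^'k^'n \<Rightarrow> real^'n^'k \<Rightarrow> real^'n^'m \<Rightarrow> (real^'n) set" where
  "omega_ker A B F C = {x. \<forall>i<CARD('n). (C ** mat_pow (A + B ** F) i) *v x = 0}"

definition ab_invariant :: "real^'n^'n \<Rightarrow> real^'k^'n \<Rightarrow> (real^'n) set \<Rightarrow> bool" where
  "ab_invariant A B V \<longleftrightarrow> subspace V \<and> (\<exists>F'::real^'n^'k. \<forall>x\<in>V. (A + B ** F') *v x \<in> V)"

definition vstar :: "real^'n^'n \<Rightarrow> real^'k^'n \<Rightarrow> real^'n^'m \<Rightarrow> (real^'n) set" where
  "vstar A B C = (THE V. ab_invariant A B V \<and> V \<subseteq> mat_ker C \<and>
      (\<forall>W. ab_invariant A B W \<and> W \<subseteq> mat_ker C \<longrightarrow> W \<subseteq> V))"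

definition argmin_set :: "('a \<Rightarrow> nat) \<Rightarrow> 'a set \<Rightarrow> 'a set" where
  "argmin_set f S = {x\<in>S. \<forall>y\<in>S. f x \<le> f y}"

end

theory Submission
  imports Defs
begin

(* V*(C) exists because (A,B)-invariance of V only asks, for each x in V, for some input u
   with Ax + Bu in V; so sums of invariant subspaces of Ker C are again invariant, and one of
   maximal dimension contains all the others.
   The kernels of [C; CM; ...; CM^(j-1)], M = A + BF, form a decreasing chain of subspaces in
   which each term is determined by the previous one, so the chain stalls within n steps and is
   constant from then on. Hence Ker Omega(C,F) is an M-invariant subspace of Ker C, so it lies
   in V*(C) and dim Ker Omega(C,F) <= dim V*(C) for every C. For a minimiser C of
   dim Ker Omega the hypothesis gives dim V*(C) = dim Ker Omega(C,F) <= dim Ker Omega(C',F)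
   <= dim V*(C') for all C'. *)

lemma ex_greatest_subspace_closed_sums:
  fixes \<S> :: "('a::euclidean_space) set set"
  assumes subspaces: "\<forall>V\<in>\<S>. subspace V" and "\<S> \<noteq> {}"
    and sums: "\<forall>V\<in>\<S>. \<forall>W\<in>\<S>. {x + y |x y. x \<in> V \<and> y \<in> W} \<in> \<S>"
  shows "\<exists>V\<in>\<S>. \<forall>W\<in>\<S>. W \<subseteq> V"
proof -
  have "finite (dim ` \<S>)"
    by (rule finite_subset[of _ "{..DIM('a)}"]) (auto simp: dim_subset_UNIV)
  then have "Max (dim ` \<S>) \<in> dim ` \<S>"
    using \<open>\<S> \<noteq> {}\<close> by (intro Max_in) auto
  then obtain V where "V \<in> \<S>" and dim_V: "dim V = Max (dim ` \<S>)" by auto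
  have "W \<subseteq> V" if "W \<in> \<S>" for W
  proof -
    define S where "S = {x + y |x y. x \<in> V \<and> y \<in> W}"
    have "S \<in> \<S>" unfolding S_def using sums \<open>V \<in> \<S>\<close> \<open>W \<in> \<S>\<close> by blast
    have "subspace V" "subspace W" using subspaces \<open>V \<in> \<S>\<close> \<open>W \<in> \<S>\<close> by auto
    then have "V \<subseteq> S" "W \<subseteq> S" unfolding S_def by (force dest: subspace_0)+
    have "dim S \<le> dim V"
      using \<open>S \<in> \<S>\<close> dim_V \<open>finite (dim ` \<S>)\<close> by simp
    then have "V = S"
      using subspace_dim_equal \<open>subspace V\<close> subspaces \<open>S \<in> \<S>\<close> \<open>V \<subseteq> S\<close> by blast
    with \<open>W \<subseteq> S\<close> show ?thesis by simp
  qed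
  with \<open>V \<in> \<S>\<close> show ?thesis by blast
qed

lemma subspace_mat_ker: "subspace (mat_ker M)"
  unfolding mat_ker_def by (rule linear_subspace_kernel[OF matrix_vector_mul_linear])

lemma decreasing_subspace_chain_stalls:
  fixes K :: "nat \<Rightarrow> ('a::euclidean_space) set"
  assumes subspaces: "\<And>j. subspace (K j)" and decreasing: "\<And>j. K (Suc j) \<subseteq> K j"
  shows "\<exists>i\<le>DIM('a). K (Suc i) = K i"
proof (rule ccontr)
  assume "\<not> ?thesis"
  then have strict: "dim (K (Suc i)) < dim (K i)" if "i \<le> DIM('a)" for i
    using that subspace_dim_equal[OF subspaces subspaces decreasing] by (meson not_less)
  have "dim (K j) + j \<le> dim (K 0)" if "j \<le> Suc DIM('a)" for j
    using that
  proof (induction j)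
    case (Suc j)
    then show ?case using strict[of j] by simp
  qed simp
  from this[of "Suc DIM('a)"] show False
    using dim_subset_UNIV[of "K 0"] by simp
qed

lemma stalled_chain_constant:
  assumes recursion: "\<And>j. K (Suc j) = f (K j)" and stall: "K (Suc i) = K i" and "i \<le> j"
  shows "K j = K i"
  using \<open>i \<le> j\<close>
proof (induction j rule: dec_induct)
  case (step j)
  have "K (Suc j) = f (K i)" using recursion step.IH by simp
  also have "\<dots> = K i" using recursion stall by metis
  finally show ?case .
qed simp

lemma mat_pow_Suc_right: "mat_pow M (Suc i) = mat_pow M i ** M"
  by (induction i) (simp_all add: matrix_mul_assoc)

definition obs_ker :: "real^'n^'n \<Rightarrow> real^'n^'m \<Rightarrow> nat \<Rightarrow> (real^'n) set" where
  "obs_ker M C j = (\<Inter>i<j. mat_ker (C ** mat_pow M i))"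

lemma subspace_obs_ker: "subspace (obs_ker M C j)"
  unfolding obs_ker_def by (intro subspace_Int subspace_mat_ker)

lemma obs_ker_Suc: "obs_ker M C (Suc j) = mat_ker C \<inter> (*v) M -` obs_ker M C j"
proof -
  have shift: "(C ** mat_pow M (Suc i)) *v x = (C ** mat_pow M i) *v (M *v x)" for i x
    by (simp only: mat_pow_Suc_right matrix_mul_assoc matrix_vector_mul_assoc)
  show ?thesis
    unfolding obs_ker_def mat_ker_def
    by (auto simp del: mat_pow.simps(2) simp: lessThan_Suc_eq_insert_0 shift)
qed

lemma obs_ker_stable:
  fixes M :: "real^'n^'n" and C :: "real^'n^'m"
  shows "obs_ker M C (Suc CARD('n)) = obs_ker M C CARD('n)"
proof -
  have "obs_ker M C (Suc j) \<subseteq> obs_ker M C j" for j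
    unfolding obs_ker_def by auto
  then obtain i where "i \<le> DIM(real^'n)" and stall: "obs_ker M C (Suc i) = obs_ker M C i"
    using decreasing_subspace_chain_stalls[of "obs_ker M C", OF subspace_obs_ker] by blast
  then have "i \<le> CARD('n)" by simp
  note chain_constant = stalled_chain_constant[of "obs_ker M C" "\<lambda>S. mat_ker C \<inter> (*v) M -` S",
      OF obs_ker_Suc stall]
  have "obs_ker M C (Suc CARD('n)) = obs_ker M C i"
    using \<open>i \<le> CARD('n)\<close> by (intro chain_constant) simp
  also have "\<dots> = obs_ker M C CARD('n)"
    using \<open>i \<le> CARD('n)\<close> by (intro chain_constant[symmetric])
  finally show ?thesis .
qed

lemma obs_ker_subset_mat_ker: "0 < j \<Longrightarrow> obs_ker M C j \<subseteq> mat_ker C"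
  unfolding obs_ker_def by auto

lemma ab_invariant_iff:
  fixes A :: "real^'n^'n" and B :: "real^'k^'n"
  assumes "subspace V"
  shows "ab_invariant A B V \<longleftrightarrow> (\<forall>x\<in>V. \<exists>u. A *v x + B *v u \<in> V)"
proof
  assume "ab_invariant A B V"
  then obtain F' :: "real^'n^'k" where F': "\<forall>x\<in>V. (A + B ** F') *v x \<in> V"
    unfolding ab_invariant_def by blast
  have "(A + B ** F') *v x = A *v x + B *v (F' *v x)" for x
    by (simp add: matrix_vector_mult_add_rdistrib matrix_vector_mul_assoc)
  with F' show "\<forall>x\<in>V. \<exists>u. A *v x + B *v u \<in> V"
    by metis
next
  assume "\<forall>x\<in>V. \<exists>u. A *v x + B *v u \<in> V"
  obtain b where b: "b \<subseteq> V" "independent b" "V \<subseteq> span b"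
    by (rule basis_exists[of V])
  with \<open>\<forall>x\<in>V. \<exists>u. _\<close> have "\<forall>x\<in>b. \<exists>u. A *v x + B *v u \<in> V"
    by blast
  then obtain g where g: "\<forall>x\<in>b. A *v x + B *v g x \<in> V"
    by (rule bchoice[elim_format]) blast
  obtain G where "linear G" and G: "\<forall>x\<in>b. G x = g x"
    using linear_independent_extend[OF b(2), of g] by blast
  define F' :: "real^'n^'k" where "F' = matrix G"
  have "(A + B ** F') *v x = A *v x + B *v G x" for x
    using \<open>linear G\<close>
    by (simp add: F'_def matrix_vector_mult_add_rdistrib matrix_vector_mul_assoc[symmetric])
  with g G have "b \<subseteq> (*v) (A + B ** F') -` V"
    by auto
  moreover have "subspace ((*v) (A + B ** F') -` V)"
    using assms by (rule linear_subspace_vimage[OF matrix_vector_mul_linear])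
  ultimately have "span b \<subseteq> (*v) (A + B ** F') -` V"
    by (rule span_minimal)
  then show "ab_invariant A B V"
    unfolding ab_invariant_def using assms b(3) by blast
qed

lemma ab_invariant_sums:
  assumes "ab_invariant A B V" and "ab_invariant A B W"
  shows "ab_invariant A B {x + y |x y. x \<in> V \<and> y \<in> W}"
proof -
  have "subspace V" "subspace W"
    using assms unfolding ab_invariant_def by auto
  have "\<exists>u. A *v (x + y) + B *v u \<in> {x + y |x y. x \<in> V \<and> y \<in> W}"
    if "x \<in> V" "y \<in> W" for x y
  proof -
    obtain u1 u2 where "A *v x + B *v u1 \<in> V" "A *v y + B *v u2 \<in> W"
      using assms ab_invariant_iff \<open>subspace V\<close> \<open>subspace W\<close> \<open>x \<in> V\<close> \<open>y \<in> W\<close> by metis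
    moreover have "A *v (x + y) + B *v (u1 + u2) = (A *v x + B *v u1) + (A *v y + B *v u2)"
      by (simp add: matrix_vector_right_distrib algebra_simps)
    ultimately show ?thesis by blast
  qed
  then show ?thesis
    unfolding ab_invariant_iff[OF subspace_sums[OF \<open>subspace V\<close> \<open>subspace W\<close>]] by blast
qed

lemma ex_greatest_ab_invariant:
  assumes "subspace K"
  shows "\<exists>V. ab_invariant A B V \<and> V \<subseteq> K \<and> (\<forall>W. ab_invariant A B W \<and> W \<subseteq> K \<longrightarrow> W \<subseteq> V)"
proof -
  let ?\<S> = "{V. ab_invariant A B V \<and> V \<subseteq> K}"
  have "\<forall>V\<in>?\<S>. subspace V"
    by (simp add: ab_invariant_def)
  moreover have "{0} \<in> ?\<S>"
    using subspace_0[OF assms] by (auto simp: ab_invariant_def)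
  moreover have "{x + y |x y. x \<in> V \<and> y \<in> W} \<in> ?\<S>" if "V \<in> ?\<S>" "W \<in> ?\<S>" for V W
    using that ab_invariant_sums subspace_add[OF assms] by blast
  ultimately obtain V where "V \<in> ?\<S>" "\<forall>W\<in>?\<S>. W \<subseteq> V"
    using ex_greatest_subspace_closed_sums[of ?\<S>] by blast
  then show ?thesis by blast
qed

lemma vstar_greatest:
  assumes "ab_invariant A B W" and "W \<subseteq> mat_ker C"
  shows "W \<subseteq> vstar A B C"
proof -
  obtain V where V: "ab_invariant A B V \<and> V \<subseteq> mat_ker C \<and>
      (\<forall>W. ab_invariant A B W \<and> W \<subseteq> mat_ker C \<longrightarrow> W \<subseteq> V)"
    using ex_greatest_ab_invariant[OF subspace_mat_ker] by blast
  then have "vstar A B C = V"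
    unfolding vstar_def by (rule the_equality) (use V in blast)
  with V assms show ?thesis by blast
qed

lemma omega_ker_subset_vstar:
  fixes A :: "real^'n^'n" and B :: "real^'k^'n" and F :: "real^'n^'k" and C :: "real^'n^'m"
  shows "omega_ker A B F C \<subseteq> vstar A B C"
proof -
  let ?K = "obs_ker (A + B ** F) C CARD('n)"
  have "omega_ker A B F C = ?K"
    unfolding omega_ker_def obs_ker_def mat_ker_def by auto
  moreover have "ab_invariant A B ?K"
    unfolding ab_invariant_def
    using subspace_obs_ker obs_ker_stable[of "A + B ** F" C] obs_ker_Suc[of "A + B ** F" C]
    by blast
  moreover have "?K \<subseteq> mat_ker C"
    by (rule obs_ker_subset_mat_ker) simp
  ultimately show ?thesis
    using vstar_greatest by metis
qed

lemma argmin_set_subset_argmin_set_of_le: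
  assumes "\<forall>x\<in>S. f x \<le> g x" and "\<forall>x\<in>argmin_set f S. g x = f x"
  shows "argmin_set f S \<subseteq> argmin_set g S"
proof
  fix x assume x: "x \<in> argmin_set f S"
  have "g x \<le> g y" if "y \<in> S" for y
  proof -
    have "g x = f x" using x assms(2) by blast
    also have "\<dots> \<le> f y" using x that unfolding argmin_set_def by blast
    also have "\<dots> \<le> g y" using that assms(1) by blast
    finally show ?thesis .
  qed
  with x show "x \<in> argmin_set g S"
    unfolding argmin_set_def by blast
qed

lemma argmin_set_eq_self:
  assumes "T \<subseteq> argmin_set g S"
  shows "argmin_set g T = T"
  using assms unfolding argmin_set_def by auto

theorem lemma5:
  fixes A :: "real^'n^'n" and B :: "real^'k^'n" and F :: "real^'n^'k"
  assumes "\<forall>C\<in>argmin_set (\<lambda>C::real^'n^'m. dim (omega_ker A B F C)) UNIV.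
             dim (omega_ker A B F C) = dim (vstar A B C)"
  shows "argmin_set (\<lambda>C::real^'n^'m. dim (omega_ker A B F C)) UNIV
           = argmin_set (\<lambda>C. dim (vstar A B C))
               (argmin_set (\<lambda>C::real^'n^'m. dim (omega_ker A B F C)) UNIV)
       \<and> argmin_set (\<lambda>C. dim (vstar A B C))
               (argmin_set (\<lambda>C::real^'n^'m. dim (omega_ker A B F C)) UNIV)
           \<subseteq> argmin_set (\<lambda>C::real^'n^'m. dim (vstar A B C)) UNIV"
proof -
  let ?BR1 = "argmin_set (\<lambda>C::real^'n^'m. dim (omega_ker A B F C)) UNIV"
  have BR1_minimises_vstar: "?BR1 \<subseteq> argmin_set (\<lambda>C::real^'n^'m. dim (vstar A B C)) UNIV"
  proof (rule argmin_set_subset_argmin_set_of_le)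
    show "\<forall>C\<in>UNIV. dim (omega_ker A B F C) \<le> dim (vstar A B C)"
      using dim_subset[OF omega_ker_subset_vstar] by blast
    show "\<forall>C\<in>?BR1. dim (vstar A B C) = dim (omega_ker A B F C)"
      using assms by simp
  qed
  then show ?thesis
    using argmin_set_eq_self[OF BR1_minimises_vstar] by simp
qed

end
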